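(* Let $\mathbf{k}$ be a field with algebraic closure $\overline{\mathbf{k}}$, let $p\ge3$ and $q\ge1$ be integers, and fix values $e_1,\dots,e_{qp}\in\mathbf{k}$. Let $f_0=t^q+e_pt^{q-1}+\cdots+e_{(q-1)p}t+e_{qp}$ and $f_i=e_it^{q-1}+e_{p+i}t^{q-2}+\cdots+e_{(q-1)p+i}$ for $1\le i\le p-1$, as polynomials in $\mathbf{k}[t]$. Then $f_0,f_1,\dots,f_{p-1}$ have a common root in $\overline{\mathbf{k}}$ if and only if for every $\mu=(\mu_1,\dots,\mu_{p-1})\in\overline{\mathbf{k}}^{p-1}$, the polynomials $f_0$ and $h_\mu=\sum_{i=1}^{p-1}\mu_if_i$ have a common root in $\overline{\mathbf{k}}$. *)

theory Defs
  imports "HOL-Computational_Algebra.Polynomial"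
begin

definition field_embedding :: "('k::field \<Rightarrow> 'K::field) \<Rightarrow> bool" where
  "field_embedding \<phi> \<longleftrightarrow> \<phi> 0 = 0 \<and> \<phi> 1 = 1 \<and>
     (\<forall>x y. \<phi> (x + y) = \<phi> x + \<phi> y) \<and> (\<forall>x y. \<phi> (x * y) = \<phi> x * \<phi> y) \<and> inj \<phi>"

definition is_algebraic_closure :: "('k::field \<Rightarrow> 'K::alg_closed_field) \<Rightarrow> bool" where
  "is_algebraic_closure \<phi> \<longleftrightarrow> field_embedding \<phi> \<and>
     (\<forall>x::'K. \<exists>g::'k poly. g \<noteq> 0 \<and> poly (map_poly \<phi> g) x = 0)"

definition f0 :: "nat \<Rightarrow> nat \<Rightarrow> (nat \<Rightarrow> 'k::field) \<Rightarrow> 'k poly" where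
  "f0 p q e = monom 1 q + (\<Sum>j=1..q. monom (e (j * p)) (q - j))"

definition fi :: "nat \<Rightarrow> nat \<Rightarrow> (nat \<Rightarrow> 'k::field) \<Rightarrow> nat \<Rightarrow> 'k poly" where
  "fi p q e i = (\<Sum>j=0..q-1. monom (e (j * p + i)) (q - 1 - j))"

end

theory Submission
  imports Defs
begin

text \<open>If no root of \<open>f\<^sub>0\<close> is a common root of all \<open>f\<^sub>i\<close>, then for each of the finitely many
  roots \<open>x\<close> of \<open>f\<^sub>0\<close> the polynomial \<open>\<Sum>\<^sub>i f\<^sub>i(x) T\<^sup>i\<close> in \<open>T\<close> is nonzero and has finitely
  many roots. Since an algebraically closed field is infinite, some \<open>c\<close> avoids all of them,
  and \<open>\<mu>\<^sub>i = c\<^sup>i\<close> gives a combination \<open>h\<^sub>\<mu>\<close> without a common root with \<open>f\<^sub>0\<close>.\<close>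

lemma infinite_UNIV_alg_closed_field: "infinite (UNIV :: 'a::alg_closed_field set)"
proof
  assume fin: "finite (UNIV :: 'a set)"
  define P :: "'a poly" where "P = (\<Prod>a\<in>UNIV. [:-a, 1:])"
  have "degree P = card (UNIV :: 'a set)"
    unfolding P_def by (subst degree_prod_eq_sum_degree) auto
  with fin have "degree (P + 1) > 0"
    by (metis degree_1 degree_add_eq_left finite_UNIV_card_ge_0)
  then obtain x where "poly (P + 1) x = 0"
    using alg_closed_imp_poly_has_root by blast
  moreover have "poly P x = 0"
    using fin by (simp add: P_def poly_prod)
  ultimately show False by simp
qed

lemma exists_power_combination_nonzero:
  fixes v :: "'b \<Rightarrow> nat \<Rightarrow> 'a::field"
  assumes "infinite (UNIV :: 'a set)" "finite X" "finite I"
    and nonzero: "\<And>x. x \<in> X \<Longrightarrow> \<exists>i\<in>I. v x i \<noteq> 0"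
  shows "\<exists>c. \<forall>x\<in>X. (\<Sum>i\<in>I. v x i * c ^ i) \<noteq> 0"
proof -
  define P where "P x = (\<Sum>i\<in>I. monom (v x i) i)" for x
  have coeff_P: "coeff (P x) i = (if i \<in> I then v x i else 0)" for x i
    using \<open>finite I\<close> by (simp add: P_def coeff_sum coeff_monom)
  have "P x \<noteq> 0" if "x \<in> X" for x
    using nonzero[OF that] coeff_P by (metis coeff_0)
  then have "finite (\<Union>x\<in>X. {c. poly (P x) c = 0})"
    using \<open>finite X\<close> poly_roots_finite by blast
  then obtain c where "c \<notin> (\<Union>x\<in>X. {c. poly (P x) c = 0})"
    using \<open>infinite UNIV\<close> ex_new_if_finite by blast
  moreover have "poly (P x) c = (\<Sum>i\<in>I. v x i * c ^ i)" for x
    by (simp add: P_def poly_sum poly_monom)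
  ultimately show ?thesis by auto
qed

lemma common_root_if_all_combinations_have_common_root:
  fixes f :: "'a::field poly" and g :: "nat \<Rightarrow> 'a poly"
  assumes "infinite (UNIV :: 'a set)" "f \<noteq> 0" "finite I"
    and combinations: "\<And>\<mu>. \<exists>x. poly f x = 0 \<and> poly (\<Sum>i\<in>I. smult (\<mu> i) (g i)) x = 0"
  shows "\<exists>x. poly f x = 0 \<and> (\<forall>i\<in>I. poly (g i) x = 0)"
proof (rule ccontr)
  assume "\<not> ?thesis"
  then have "\<exists>c. \<forall>x\<in>{x. poly f x = 0}. (\<Sum>i\<in>I. poly (g i) x * c ^ i) \<noteq> 0"
    using assms(1,3) poly_roots_finite[OF \<open>f \<noteq> 0\<close>]
    by (intro exists_power_combination_nonzero) auto
  then obtain c where c: "\<And>x. poly f x = 0 \<Longrightarrow> (\<Sum>i\<in>I. poly (g i) x * c ^ i) \<noteq> 0"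
    by blast
  obtain x where "poly f x = 0" "poly (\<Sum>i\<in>I. smult (c ^ i) (g i)) x = 0"
    using combinations by blast
  with c show False
    by (simp add: poly_sum mult.commute)
qed

lemma coeff_f0_top: "coeff (f0 p q e) q = 1"
proof -
  have "coeff (\<Sum>j=1..q. monom (e (j * p)) (q - j)) q = 0"
    unfolding coeff_sum coeff_monom by (intro sum.neutral) auto
  then show ?thesis
    by (simp add: f0_def coeff_monom)
qed

lemma map_poly_f0_nonzero:
  assumes "field_embedding \<phi>"
  shows "map_poly \<phi> (f0 p q e) \<noteq> 0"
proof -
  have "\<phi> 0 = 0" "\<phi> 1 = 1"
    using assms by (auto simp: field_embedding_def)
  then have "coeff (map_poly \<phi> (f0 p q e)) q = 1"
    by (simp add: coeff_map_poly coeff_f0_top)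
  then show ?thesis by auto
qed

theorem lemma4p3:
  fixes \<phi> :: "'k::field \<Rightarrow> 'K::alg_closed_field"
    and p q :: nat and e :: "nat \<Rightarrow> 'k"
  assumes "is_algebraic_closure \<phi>"
    and "p \<ge> 3" and "q \<ge> 1"
  shows "(\<exists>x::'K. poly (map_poly \<phi> (f0 p q e)) x = 0 \<and>
                 (\<forall>i\<in>{1..p-1}. poly (map_poly \<phi> (fi p q e i)) x = 0))
     \<longleftrightarrow> (\<forall>\<mu>::nat \<Rightarrow> 'K. \<exists>x::'K. poly (map_poly \<phi> (f0 p q e)) x = 0 \<and>
                 poly (\<Sum>i=1..p-1. smult (\<mu> i) (map_poly \<phi> (fi p q e i))) x = 0)"
proof
  show "\<forall>\<mu>. \<exists>x. poly (map_poly \<phi> (f0 p q e)) x = 0 \<and>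
          poly (\<Sum>i=1..p-1. smult (\<mu> i) (map_poly \<phi> (fi p q e i))) x = 0"
    if "\<exists>x. poly (map_poly \<phi> (f0 p q e)) x = 0 \<and>
          (\<forall>i\<in>{1..p-1}. poly (map_poly \<phi> (fi p q e i)) x = 0)"
    using that by (auto simp: poly_sum)
next
  have "map_poly \<phi> (f0 p q e) \<noteq> 0"
    using assms(1) by (simp add: is_algebraic_closure_def map_poly_f0_nonzero)
  then show "\<exists>x. poly (map_poly \<phi> (f0 p q e)) x = 0 \<and>
          (\<forall>i\<in>{1..p-1}. poly (map_poly \<phi> (fi p q e i)) x = 0)"
    if "\<forall>\<mu>. \<exists>x. poly (map_poly \<phi> (f0 p q e)) x = 0 \<and>
          poly (\<Sum>i=1..p-1. smult (\<mu> i) (map_poly \<phi> (fi p q e i))) x = 0"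
    using that infinite_UNIV_alg_closed_field
    by (intro common_root_if_all_combinations_have_common_root) auto
qed

end
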